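(* Let $G$ be a non-trivial finite abelian group with $G\not\simeq C_2^2$ and let $f$ be an automorphism of $\mathcal{P}_0(G)$ with trivial pullback. Suppose that the following two conditions hold: (A) for every proper subgroup $H$ of $G$, the restriction of $f$ to $\mathcal{P}_{0}(H)$ is the identity; (B) for every subgroup $H$ of $G$ that is cyclic of prime order, the induced automorphism $f_{G/H}$ of $\mathcal{P}_0(G/H)$ is the identity. Then $f$ is the identity.
   Context: For an additively written finite abelian group $G$, $\mathcal{P}_{0}(G)$ is the monoid of all subsets of $G$ containing $0$, with setwise addition and identity $\{0\}$. An automorphism $f$ of $\mathcal{P}_0(G)$ has trivial pullback if $f(\{0,a\})=\{0,a\}$ for all $a\in G$. For a subgroup $H$, let $\mathcal{P}_{0,H}(G)=\{H+X:X\in\mathcal{P}_0(G)\}$, a monoid with identity $H$, and let $\varphi_H:\mathcal{P}_{0,H}(G)\to\mathcal{P}_0(G/H)$, $H+X\mapsto\{a+H:a\in X\}$, which is a monoid isomorphism. If $f$ has trivial pullback, then $f(H)=H$ and $f$ maps $\mathcal{P}_{0,H}(G)$ onto itself; the induced automorphism is $f_{G/H}=\varphi_H\circ f|_{\mathcal{P}_{0,H}(G)}\circ\varphi_H^{-1}$. Restriction of $f$ to $\mathcal{P}_0(H)$ makes sense since $f$ maps $\mathcal{P}_0(H)$ onto itself for such $f$. $C_2^2$ is the Klein four-group. *)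

theory Defs
  imports Main "HOL-Library.Set_Algebras" "HOL-Computational_Algebra.Primes"
begin

text \<open>The ambient finite abelian group G is the whole of a finite type 'a of class ab_group_add.
Subsets are added setwise (plus_set from Set_Algebras).\<close>

definition P0 :: "'a::zero set set" where
  "P0 = {X. 0 \<in> X}"

definition is_subgroup :: "'a::ab_group_add set \<Rightarrow> bool" where
  "is_subgroup H \<longleftrightarrow> 0 \<in> H \<and> (\<forall>x\<in>H. \<forall>y\<in>H. x + y \<in> H) \<and> (\<forall>x\<in>H. - x \<in> H)"

definition zmult :: "int \<Rightarrow> 'a::ab_group_add \<Rightarrow> 'a" where
  "zmult k g = (if 0 \<le> k then ((+) g ^^ nat k) 0 else - (((+) g ^^ nat (- k)) 0))"

definition is_cyclic_subgroup :: "'a::ab_group_add set \<Rightarrow> bool" where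
  "is_cyclic_subgroup H \<longleftrightarrow> (\<exists>g. H = {zmult k g | k. True})"

definition is_P0_aut :: "('a::ab_group_add set \<Rightarrow> 'a set) \<Rightarrow> bool" where
  "is_P0_aut f \<longleftrightarrow> bij_betw f P0 P0 \<and> f {0} = {0} \<and>
     (\<forall>X\<in>P0. \<forall>Y\<in>P0. f (X + Y) = f X + f Y)"

definition trivial_pullback :: "('a::ab_group_add set \<Rightarrow> 'a set) \<Rightarrow> bool" where
  "trivial_pullback f \<longleftrightarrow> (\<forall>a. f {0, a} = {0, a})"

text \<open>The quotient group G/H is the set of cosets a + H, with setwise addition; its zero is H.\<close>
definition quot :: "'a::ab_group_add set \<Rightarrow> 'a set set" where
  "quot H = range (\<lambda>a. a +o H)"

definition P0_quot :: "'a::ab_group_add set \<Rightarrow> 'a set set set" where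
  "P0_quot H = {S. S \<subseteq> quot H \<and> H \<in> S}"

text \<open>phi_H : P_{0,H}(G) \<rightarrow> P_0(G/H),  H + X \<mapsto> {a + H : a \<in> X}.\<close>
definition phi :: "'a::ab_group_add set \<Rightarrow> 'a set \<Rightarrow> 'a set set" where
  "phi H Y = (\<lambda>a. a +o H) ` Y"

text \<open>The inverse of phi_H: a set S of cosets is sent to the union of its cosets, i.e. H + X
  for any X with phi_H(H + X) = S.\<close>
definition phi_inv :: "'a::ab_group_add set \<Rightarrow> 'a set set \<Rightarrow> 'a set" where
  "phi_inv H S = \<Union> S"

definition induced_aut :: "('a::ab_group_add set \<Rightarrow> 'a set) \<Rightarrow> 'a set \<Rightarrow> 'a set set \<Rightarrow> 'a set set" where
  "induced_aut f H S = phi H (f (phi_inv H S))"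

definition klein_add :: "bool \<times> bool \<Rightarrow> bool \<times> bool \<Rightarrow> bool \<times> bool" where
  "klein_add p q = (fst p \<noteq> fst q, snd p \<noteq> snd q)"

definition iso_klein :: "'a::ab_group_add itself \<Rightarrow> bool" where
  "iso_klein _ \<longleftrightarrow> (\<exists>\<phi> :: 'a \<Rightarrow> bool \<times> bool. bij \<phi> \<and> (\<forall>x y. \<phi> (x + y) = klein_add (\<phi> x) (\<phi> y)))"

end

theory Submission
  imports Defs
begin

(* Strong induction on the number of elements missing from X \<in> P0(G).
   If X + {0,a} = X for some a \<noteq> 0, then X is a union of cosets of a subgroup H of prime
   order generated by a multiple of a, and (B) for G/H gives f X = X.  Otherwise every
   X + {0,a} with a \<noteq> 0 is strictly larger than X, so f X + {0,a} = f (X + {0,a}) = X + {0,a}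
   by induction, and these sets determine X as soon as X misses two elements.
   It remains to treat the complements G - {g}.  They are exactly the proper X with
   X + {0,a} = G for all a \<noteq> 0, so f permutes them: f (G - {g}) = G - {\<sigma> g}.
   Comparing f (G - {g,h}) + {0, g - h} and f (G - {g,h}) + {0, h - g} shows
   \<sigma> g - \<sigma> h = g - h whenever 2 (g - h) \<noteq> 0; if G has an element of order > 2 this makes
   \<sigma> a translation, which is trivial because \<sigma> never takes the value 0.  If G has exponent 2
   and \<sigma> g \<noteq> g, the subgroup M generated by g and \<sigma> g is proper because G is not the Klein
   group, and G - {g} = (M - {g}) + ({0} \<union> (G - M)) with (A) puts \<sigma> g \<in> M - {g} into
   f (G - {g}) = G - {\<sigma> g}, a contradiction. *)

lemma mem_plus_pair: "z \<in> X + {0, a} \<longleftrightarrow> z \<in> X \<or> z - a \<in> X"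
  for X :: "'a::ab_group_add set"
  unfolding set_plus_def by (auto, metis diff_add_cancel)

lemma UNIV_plus: "0 \<in> Y \<Longrightarrow> UNIV + Y = (UNIV :: 'a::ab_group_add set)"
  by (metis add.commute set_zero_plus2 top.extremum_uniqueI)

definition nmult :: "nat \<Rightarrow> 'a::ab_group_add \<Rightarrow> 'a" where
  "nmult n g = ((+) g ^^ n) 0"

lemma nmult_0 [simp]: "nmult 0 g = 0"
  by (simp add: nmult_def)

lemma nmult_Suc: "nmult (Suc n) g = g + nmult n g"
  by (simp add: nmult_def)

lemma nmult_1 [simp]: "nmult 1 g = g"
  by (simp add: nmult_Suc)

lemma nmult_add: "nmult (m + n) g = nmult m g + nmult n g"
  by (induction m) (simp_all add: nmult_Suc add.assoc)

lemma nmult_mult: "nmult (m * n) g = nmult m (nmult n g)"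
  by (induction m) (simp_all add: nmult_Suc nmult_add)

lemma nmult_zero [simp]: "nmult n 0 = 0"
  by (induction n) (simp_all add: nmult_Suc)

lemma zmult_eq_nmult: "zmult k g = (if 0 \<le> k then nmult (nat k) g else - nmult (nat (- k)) g)"
  by (simp add: zmult_def nmult_def)

lemma nmult_mod: "nmult p g = 0 \<Longrightarrow> nmult n g = nmult (n mod p) g"
  by (metis add_0 div_mult_mod_eq nmult_add nmult_mult nmult_zero)

lemma uminus_nmult:
  assumes "nmult p g = 0" "0 < p"
  shows "- nmult m g = nmult ((p - 1) * m) g"
proof -
  have "m + (p - 1) * m = m * p"
    using \<open>0 < p\<close> by (cases p) simp_all
  then have "nmult m g + nmult ((p - 1) * m) g = nmult (m * p) g"
    by (metis nmult_add)
  also have "\<dots> = 0"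
    by (simp add: nmult_mult assms(1))
  finally show ?thesis
    by (simp add: add_eq_0_iff)
qed

lemma ex_nmult_eq_0:
  fixes a :: "'a::{finite,ab_group_add}"
  shows "\<exists>n>0. nmult n a = 0"
proof -
  have "\<not> inj (\<lambda>n. nmult n a)"
    using finite_imageD[of "\<lambda>n. nmult n a" UNIV] infinite_UNIV_nat by auto
  then obtain i j where "i < j" and eq: "nmult i a = nmult j a"
    unfolding inj_def by (metis linorder_neqE_nat)
  have "nmult i a + nmult (j - i) a = nmult j a"
    using \<open>i < j\<close> by (simp flip: nmult_add)
  then have "nmult (j - i) a = 0"
    by (simp add: eq)
  then show ?thesis
    using \<open>i < j\<close> by (intro exI[of _ "j - i"]) simp
qed

definition has_add_order :: "'a::ab_group_add \<Rightarrow> nat \<Rightarrow> bool" where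
  "has_add_order g n \<longleftrightarrow> 0 < n \<and> nmult n g = 0 \<and> (\<forall>j. 0 < j \<longrightarrow> j < n \<longrightarrow> nmult j g \<noteq> 0)"

lemma ex_has_add_order:
  fixes a :: "'a::{finite,ab_group_add}"
  shows "\<exists>n. has_add_order a n"
proof -
  define n where "n = (LEAST n. 0 < n \<and> nmult n a = 0)"
  have "0 < n \<and> nmult n a = 0"
    unfolding n_def by (rule LeastI_ex) (rule ex_nmult_eq_0)
  moreover have "nmult j a \<noteq> 0" if "0 < j" "j < n" for j
    using that not_less_Least unfolding n_def by blast
  ultimately show ?thesis
    unfolding has_add_order_def by blast
qed

lemma has_add_order_nmult:
  assumes "has_add_order a (p * q)"
  shows "has_add_order (nmult q a) p"
  using assms unfolding has_add_order_def
  by (auto simp flip: nmult_mult)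

lemma ex_prime_add_order_multiple:
  fixes a :: "'a::{finite,ab_group_add}"
  assumes "a \<noteq> 0"
  obtains q p where "prime p" "has_add_order (nmult q a) p"
proof -
  obtain n where n: "has_add_order a n"
    using ex_has_add_order by blast
  then have "n \<noteq> 1"
    using assms nmult_1[of a] unfolding has_add_order_def by fastforce
  then obtain p where "prime p" "p dvd n"
    using prime_factor_nat by blast
  then obtain q where "n = p * q"
    by (elim dvdE)
  then have "has_add_order (nmult q a) p"
    using has_add_order_nmult[of a p q] n by simp
  then show ?thesis
    using that \<open>prime p\<close> by blast
qed

lemma cyclic_span_eq_range_nmult:
  assumes "nmult p g = 0" "0 < p"
  shows "{zmult k g | k. True} = range (\<lambda>n. nmult n g)"
  using uminus_nmult[OF assms] by (auto simp: zmult_eq_nmult) (metis of_nat_0_le_iff nat_int)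

lemma range_nmult_eq:
  assumes "has_add_order g p"
  shows "range (\<lambda>n. nmult n g) = (\<lambda>j. nmult j g) ` {..<p}"
proof -
  have "nmult p g = 0" "0 < p"
    using assms unfolding has_add_order_def by auto
  then have "nmult n g \<in> (\<lambda>j. nmult j g) ` {..<p}" for n
    using nmult_mod[of p g n] by (metis image_eqI lessThan_iff mod_less_divisor)
  then show ?thesis
    by auto
qed

lemma inj_on_nmult:
  assumes "has_add_order g p"
  shows "inj_on (\<lambda>j. nmult j g) {..<p}"
proof (rule inj_onI)
  have no_period: "nmult i g \<noteq> nmult j g" if "i < j" "j < p" for i j
    using assms that nmult_add[of i "j - i" g] unfolding has_add_order_def by auto
  fix i j assume "i \<in> {..<p}" "j \<in> {..<p}" "nmult i g = nmult j g"
  then show "i = j"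
    using no_period by (metis lessThan_iff linorder_neqE_nat)
qed

lemma is_subgroup_range_nmult:
  assumes "nmult p g = 0" "0 < p"
  shows "is_subgroup (range (\<lambda>n. nmult n g))"
  unfolding is_subgroup_def using uminus_nmult[OF assms]
  by (auto simp flip: nmult_add) (metis nmult_0 rangeI)

lemma ex_prime_cyclic_subgroup_of_multiples:
  fixes a :: "'a::{finite,ab_group_add}"
  assumes "a \<noteq> 0"
  obtains H where "is_subgroup H" "is_cyclic_subgroup H" "prime (card H)"
    "H \<subseteq> range (\<lambda>n. nmult n a)"
proof -
  obtain q p where p: "prime p" and ord: "has_add_order (nmult q a) p"
    using ex_prime_add_order_multiple[OF assms] .
  define g where "g = nmult q a"
  define H where "H = range (\<lambda>n. nmult n g)"
  have g_order: "nmult p g = 0" "0 < p"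
    using ord unfolding g_def has_add_order_def by auto
  have "is_subgroup H"
    unfolding H_def by (rule is_subgroup_range_nmult[OF g_order])
  moreover have "is_cyclic_subgroup H"
    using cyclic_span_eq_range_nmult[OF g_order] unfolding H_def is_cyclic_subgroup_def by blast
  moreover have "card H = p"
    unfolding H_def g_def range_nmult_eq[OF ord] by (rule card_image[OF inj_on_nmult[OF ord], simplified])
  moreover have "H \<subseteq> range (\<lambda>n. nmult n a)"
    unfolding H_def g_def by (auto simp flip: nmult_mult)
  ultimately show ?thesis
    using that p by simp
qed

lemma plus_pair_stable_nmult:
  fixes X :: "'a::ab_group_add set"
  assumes "X + {0, a} = X" "y \<in> X"
  shows "y + nmult n a \<in> X"
proof (induction n)
  case 0
  then show ?case
    using assms(2) by simp
next
  case (Suc n)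
  then have "y + nmult n a + a \<in> X + {0, a}"
    by (simp add: mem_plus_pair)
  then show ?case
    using assms(1) by (simp add: nmult_Suc add_ac)
qed

lemma phi_inv_phi:
  fixes Y :: "'a::ab_group_add set"
  assumes "\<forall>y\<in>Y. \<forall>h\<in>H. y + h \<in> Y" "0 \<in> H"
  shows "phi_inv H (phi H Y) = Y"
  using assms unfolding phi_inv_def phi_def elt_set_plus_def by force

lemma phi_in_P0_quot:
  fixes Y :: "'a::ab_group_add set"
  assumes "0 \<in> Y"
  shows "phi H Y \<in> P0_quot H"
  using assms unfolding P0_quot_def phi_def quot_def by (force simp: image_iff)

lemma complement_singleton_plus_pair:
  fixes a :: "'a::ab_group_add"
  assumes "a \<noteq> 0"
  shows "- {g} + {0, a} = UNIV"
  using assms by (auto simp: mem_plus_pair)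

lemma eq_complement_singleton_if_plus_pairs_UNIV:
  fixes X :: "'a::ab_group_add set"
  assumes "X \<noteq> UNIV" and plus_pair: "\<And>a. a \<noteq> 0 \<Longrightarrow> X + {0, a} = UNIV"
  obtains g where "X = - {g}"
proof -
  obtain g where g: "g \<notin> X"
    using assms(1) by blast
  have "y \<in> X" if "y \<noteq> g" for y
  proof (rule ccontr)
    assume "y \<notin> X"
    then have "g \<notin> X + {0, g - y}"
      using g by (simp add: mem_plus_pair)
    then show False
      using plus_pair[of "g - y"] that by simp
  qed
  then have "X = - {g}"
    using g by blast
  then show ?thesis
    using that by blast
qed

lemma complement_pair_plus_pair:
  fixes g h :: "'a::ab_group_add"
  assumes "(g - h) + (g - h) \<noteq> 0"
  shows "- {g, h} + {0, g - h} = - {g}"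
proof -
  have "h - (g - h) \<noteq> g"
    using assms by (auto simp: algebra_simps)
  moreover have "g \<noteq> h"
    using assms by auto
  ultimately show ?thesis
    by (auto simp: mem_plus_pair)
qed

lemma subset_if_plus_pairs_eq:
  fixes X Y :: "'a::ab_group_add set"
  assumes eq: "\<And>a. a \<noteq> 0 \<Longrightarrow> Y + {0, a} = X + {0, a}"
    and "y \<notin> X" "z \<notin> X" "y \<noteq> z"
  shows "Y \<subseteq> X"
proof
  fix x assume "x \<in> Y"
  show "x \<in> X"
  proof (rule ccontr)
    assume "x \<notin> X"
    obtain w where "w \<notin> X" "w \<noteq> x"
      using assms(2-4) by metis
    then have "x \<notin> X + {0, x - w}"
      using \<open>x \<notin> X\<close> by (simp add: mem_plus_pair)
    moreover have "x \<in> Y + {0, x - w}"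
      using \<open>x \<in> Y\<close> by (simp add: mem_plus_pair)
    ultimately show False
      using eq[of "x - w"] \<open>w \<noteq> x\<close> by simp
  qed
qed

lemma complement_singleton_eq_plus:
  fixes M :: "'a::ab_group_add set"
  assumes "is_subgroup M" "g \<in> M" "g \<noteq> 0"
  shows "(M - {g}) + insert 0 (- M) = - {g}"
proof (intro equalityI subsetI)
  fix z assume "z \<in> (M - {g}) + insert 0 (- M)"
  then obtain m w where "m \<in> M - {g}" "w \<in> insert 0 (- M)" "z = m + w"
    unfolding set_plus_def by blast
  moreover have "g - m \<in> M" if "m \<in> M"
    using assms(1,2) that unfolding is_subgroup_def by (metis diff_conv_add_uminus)
  ultimately show "z \<in> - {g}"
    by (auto simp: algebra_simps)
next
  fix z assume "z \<in> - {g}"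
  then show "z \<in> (M - {g}) + insert 0 (- M)"
    using assms(1,3) unfolding is_subgroup_def
    by (metis Compl_iff DiffI add.right_neutral add_0 insertCI insertI1 set_plus_intro singletonD)
qed

lemma is_subgroup_span_pair_exp2:
  fixes g s :: "'a::ab_group_add"
  assumes "\<And>c::'a. c + c = 0"
  shows "is_subgroup {0, g, s, g + s}"
proof -
  have [simp]: "- c = c" for c :: 'a
    using assms minus_unique by blast
  have [simp]: "c + (c + d) = d" for c d :: 'a
    by (simp flip: add.assoc add: assms)
  show ?thesis
    unfolding is_subgroup_def by (auto simp: assms add_ac)
qed

lemma iso_klein_if_exp2:
  fixes g s :: "'a::ab_group_add"
  assumes exp2: "\<And>c::'a. c + c = 0" and "g \<noteq> 0" "s \<noteq> 0" "g \<noteq> s"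
    and span: "{0, g, s, g + s} = UNIV"
  shows "iso_klein TYPE('a)"
proof -
  define \<psi> :: "bool \<times> bool \<Rightarrow> 'a" where
    "\<psi> p = (if fst p then g else 0) + (if snd p then s else 0)" for p
  have xor: "(if x \<noteq> y then v else 0) = (if x then v else 0) + (if y then v else 0)"
    for x y and v :: 'a
    by (cases x; cases y) (simp_all add: exp2)
  have hom: "\<psi> (klein_add p q) = \<psi> p + \<psi> q" for p q
    unfolding \<psi>_def klein_add_def by (simp only: xor prod.sel add_ac)
  have "g + s \<noteq> 0"
    using \<open>g \<noteq> s\<close> exp2 by (metis add_right_cancel)
  then have kernel: "p = (False, False)" if "\<psi> p = 0" for p
    using that assms(2,3) unfolding \<psi>_def by (cases p) (simp split: if_splits)
  have "inj \<psi>"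
  proof (rule injI)
    fix p q assume "\<psi> p = \<psi> q"
    then have "\<psi> (klein_add p q) = 0"
      by (simp only: hom exp2)
    then have "klein_add p q = (False, False)"
      by (rule kernel)
    then show "p = q"
      by (simp add: klein_add_def prod_eq_iff)
  qed
  have "\<psi> (False, False) = 0" "\<psi> (True, False) = g" "\<psi> (False, True) = s" "\<psi> (True, True) = g + s"
    by (simp_all add: \<psi>_def)
  then have "surj \<psi>"
    using span by (metis empty_subsetI insert_subset rangeI top.extremum_uniqueI)
  have "bij (inv \<psi>)"
    using \<open>inj \<psi>\<close> \<open>surj \<psi>\<close> by (intro bij_imp_bij_inv bijI)
  moreover have "inv \<psi> (x + y) = klein_add (inv \<psi> x) (inv \<psi> y)" for x y
  proof -
    have "x + y = \<psi> (klein_add (inv \<psi> x) (inv \<psi> y))"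
      using hom surj_f_inv_f[OF \<open>surj \<psi>\<close>] by simp
    then show ?thesis
      using inv_f_f[OF \<open>inj \<psi>\<close>] by simp
  qed
  ultimately show ?thesis
    unfolding iso_klein_def by blast
qed

lemma shift_const_if_diff_preserved:
  fixes \<sigma> :: "'a::ab_group_add \<Rightarrow> 'a" and c :: 'a
  assumes diff: "\<And>x y. x \<noteq> 0 \<Longrightarrow> y \<noteq> 0 \<Longrightarrow> (x - y) + (x - y) \<noteq> 0 \<Longrightarrow> \<sigma> x - \<sigma> y = x - y"
    and "c + c \<noteq> 0" "x \<noteq> 0" "y \<noteq> 0"
  shows "\<sigma> x - x = \<sigma> y - y"
proof -
  have shift: "\<sigma> x - x = \<sigma> y - y" if "x \<noteq> 0" "y \<noteq> 0" "(x - y) + (x - y) \<noteq> 0" for x y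
    using diff[OF that] by (simp add: algebra_simps)
  show ?thesis
  proof (cases "(x - y) + (x - y) = 0")
    case False
    then show ?thesis
      using shift assms(3,4) by blast
  next
    case True
    have "(x + c) - (x - c) = c + c"
      by (simp add: algebra_simps)
    then have "x + c \<noteq> 0 \<or> x - c \<noteq> 0"
      using \<open>c + c \<noteq> 0\<close> by auto
    then obtain k where k: "k \<noteq> 0" "k = x + c \<or> k = x - c"
      by blast
    then have xk: "(x - k) + (x - k) \<noteq> 0"
      using \<open>c + c \<noteq> 0\<close> by (auto simp: algebra_simps)
    have "(k - y) + (k - y) = ((x - y) + (x - y)) - ((x - k) + (x - k))"
      by (simp add: algebra_simps)
    also have "\<dots> = - ((x - k) + (x - k))"
      by (simp only: True diff_0)
    finally have "(k - y) + (k - y) = - ((x - k) + (x - k))" .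
    then have ky: "(k - y) + (k - y) \<noteq> 0"
      using xk by (simp only: neg_equal_0_iff_equal not_False_eq_True)
    show ?thesis
      using shift[OF \<open>x \<noteq> 0\<close> k(1) xk] shift[OF k(1) \<open>y \<noteq> 0\<close> ky] by simp
  qed
qed

definition id_on_proper_subgroups :: "('a::ab_group_add set \<Rightarrow> 'a set) \<Rightarrow> bool" where
  "id_on_proper_subgroups f \<longleftrightarrow>
     (\<forall>H. is_subgroup H \<longrightarrow> H \<noteq> UNIV \<longrightarrow> (\<forall>X\<in>P0. X \<subseteq> H \<longrightarrow> f X = X))"

definition id_on_prime_quotients :: "('a::ab_group_add set \<Rightarrow> 'a set) \<Rightarrow> bool" where
  "id_on_prime_quotients f \<longleftrightarrow>
     (\<forall>H. is_subgroup H \<longrightarrow> is_cyclic_subgroup H \<longrightarrow> prime (card H) \<longrightarrow>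
        (\<forall>S\<in>P0_quot H. induced_aut f H S = S))"

locale trivial_pullback_aut =
  fixes f :: "'a::{finite,ab_group_add} set \<Rightarrow> 'a set"
  assumes aut: "is_P0_aut f" and pull: "trivial_pullback f"
begin

lemma bij_betw_P0: "bij_betw f P0 P0"
  using aut unfolding is_P0_aut_def by blast

lemma zero_in_image: "0 \<in> X \<Longrightarrow> 0 \<in> f X"
  using bij_betwE[OF bij_betw_P0] unfolding P0_def by blast

lemma image_eq_iff: "0 \<in> X \<Longrightarrow> 0 \<in> Y \<Longrightarrow> f X = f Y \<longleftrightarrow> X = Y"
  using bij_betw_imp_inj_on[OF bij_betw_P0] unfolding P0_def inj_on_def by blast

lemma ex_preimage: "0 \<in> Z \<Longrightarrow> \<exists>Y. 0 \<in> Y \<and> f Y = Z"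
  using bij_betw_imp_surj_on[OF bij_betw_P0] unfolding P0_def by (metis imageE mem_Collect_eq)

lemma image_plus: "0 \<in> X \<Longrightarrow> 0 \<in> Y \<Longrightarrow> f (X + Y) = f X + f Y"
  using aut unfolding is_P0_aut_def P0_def by simp

lemma image_plus_pair: "0 \<in> X \<Longrightarrow> f (X + {0, a}) = f X + {0, a}"
  using image_plus[of X "{0, a}"] pull unfolding trivial_pullback_def by simp

lemma image_UNIV: "f UNIV = UNIV"
proof -
  obtain Y where Y: "0 \<in> Y" "f Y = UNIV"
    using ex_preimage by blast
  have "f UNIV = f (UNIV + Y)"
    using UNIV_plus[OF \<open>0 \<in> Y\<close>] by simp
  also have "\<dots> = f UNIV + UNIV"
    using image_plus[of UNIV Y] Y by simp
  also have "\<dots> = UNIV"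
    using UNIV_plus[OF zero_in_image[of UNIV]] by (simp add: add.commute)
  finally show ?thesis .
qed

lemma fixed_if_plus_pair_stable:
  assumes "id_on_prime_quotients f" "0 \<in> X" "a \<noteq> 0" and stable: "X + {0, a} = X"
  shows "f X = X"
proof -
  obtain H where H: "is_subgroup H" "is_cyclic_subgroup H" "prime (card H)"
    and H_multiples: "H \<subseteq> range (\<lambda>n. nmult n a)"
    using ex_prime_cyclic_subgroup_of_multiples[OF \<open>a \<noteq> 0\<close>] .
  have "0 \<in> H"
    using H(1) unfolding is_subgroup_def by blast
  have phi_inv_phi_stable: "phi_inv H (phi H Y) = Y" if "Y + {0, a} = Y" for Y
  proof (rule phi_inv_phi[OF _ \<open>0 \<in> H\<close>], intro ballI)
    fix y h assume "y \<in> Y" "h \<in> H"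
    then obtain n where "h = nmult n a"
      using H_multiples by blast
    then show "y + h \<in> Y"
      using plus_pair_stable_nmult[OF that \<open>y \<in> Y\<close>] by simp
  qed
  have "f X + {0, a} = f (X + {0, a})"
    by (rule image_plus_pair[OF \<open>0 \<in> X\<close>, symmetric])
  then have "f X + {0, a} = f X"
    using stable by simp
  have "phi H (f X) = induced_aut f H (phi H X)"
    unfolding induced_aut_def phi_inv_phi_stable[OF stable] ..
  also have "\<dots> = phi H X"
    using assms(1) H phi_in_P0_quot[OF \<open>0 \<in> X\<close>] unfolding id_on_prime_quotients_def by blast
  finally have "phi H (f X) = phi H X" .
  then show ?thesis
    using phi_inv_phi_stable[OF stable] phi_inv_phi_stable[OF \<open>f X + {0, a} = f X\<close>] by simp
qed

lemma image_complement_singleton: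
  assumes "g \<noteq> 0"
  obtains s where "s \<noteq> 0" "f (- {g}) = - {s}"
proof -
  have g0: "0 \<in> - {g}"
    using assms by simp
  have "f (- {g}) \<noteq> UNIV"
    using image_eq_iff[OF g0, of UNIV] image_UNIV by auto
  moreover have "f (- {g}) + {0, a} = UNIV" if "a \<noteq> 0" for a
  proof -
    have "f (- {g}) + {0, a} = f (- {g} + {0, a})"
      by (rule image_plus_pair[OF g0, symmetric])
    then show ?thesis
      using complement_singleton_plus_pair[OF that] image_UNIV by simp
  qed
  ultimately obtain s where "f (- {g}) = - {s}"
    by (rule eq_complement_singleton_if_plus_pairs_UNIV)
  moreover have "s \<noteq> 0"
    using zero_in_image[OF g0] calculation by auto
  ultimately show ?thesis
    using that by blast
qed

lemma image_complement_singleton_diff: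
  assumes "g \<noteq> 0" "h \<noteq> 0" and d: "(g - h) + (g - h) \<noteq> 0"
    and s: "f (- {g}) = - {s}" and r: "f (- {h}) = - {r}"
  shows "s - r = g - h"
proof -
  have "(h - g) + (h - g) = - ((g - h) + (g - h))"
    by (simp only: minus_add_distrib minus_diff_eq)
  then have d': "(h - g) + (h - g) \<noteq> 0"
    using d by (simp only: neg_equal_0_iff_equal not_False_eq_True)
  have W0: "0 \<in> - {g, h}"
    using assms(1,2) by simp
  define W where "W = f (- {g, h})"
  have "W + {0, g - h} = f (- {g, h} + {0, g - h})"
    unfolding W_def by (rule image_plus_pair[OF W0, symmetric])
  then have "W + {0, g - h} = - {s}"
    using complement_pair_plus_pair[OF d] s by simp
  then have "s \<notin> W + {0, g - h}"
    by simp
  then have "s \<notin> W \<and> s - (g - h) \<notin> W"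
    unfolding mem_plus_pair by simp
  moreover have "s - (g - h) - (h - g) = s"
    by (simp add: algebra_simps)
  ultimately have "s - (g - h) \<notin> W + {0, h - g}"
    unfolding mem_plus_pair by simp
  moreover have "W + {0, h - g} = f (- {h, g} + {0, h - g})"
    unfolding W_def insert_commute[of g h] by (rule image_plus_pair[symmetric]) (use assms(1,2) in simp)
  ultimately have "s - (g - h) = r"
    using complement_pair_plus_pair[OF d'] r by simp
  then show ?thesis
    by (auto simp: algebra_simps)
qed

lemma complement_singleton_fixed_if_not_exp2:
  fixes c :: 'a
  assumes "c + c \<noteq> 0" "g \<noteq> 0"
  shows "f (- {g}) = - {g}"
proof -
  have "\<forall>x. \<exists>s. x \<noteq> 0 \<longrightarrow> s \<noteq> 0 \<and> f (- {x}) = - {s}"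
    using image_complement_singleton by metis
  then obtain \<sigma> where \<sigma>: "\<And>x. x \<noteq> 0 \<Longrightarrow> \<sigma> x \<noteq> 0 \<and> f (- {x}) = - {\<sigma> x}"
    by metis
  have shift: "\<sigma> x - x = \<sigma> g - g" if "x \<noteq> 0" for x
    using shift_const_if_diff_preserved[OF _ \<open>c + c \<noteq> 0\<close> that \<open>g \<noteq> 0\<close>]
      image_complement_singleton_diff \<sigma> by blast
  show ?thesis
  proof (rule ccontr)
    assume "f (- {g}) \<noteq> - {g}"
    then have "g - \<sigma> g \<noteq> 0"
      using \<sigma>[OF \<open>g \<noteq> 0\<close>] by auto
    moreover have "\<sigma> (g - \<sigma> g) = 0"
      using shift[OF calculation] by (simp add: algebra_simps)
    ultimately show False
      using \<sigma> by blast
  qed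
qed

lemma image_complement_singleton_notin_subgroup:
  assumes "id_on_proper_subgroups f"
    and M: "is_subgroup M" "M \<noteq> UNIV" and "g \<in> M" "g \<noteq> 0"
    and s: "f (- {g}) = - {s}"
  shows "s = g \<or> s \<notin> M"
proof -
  have "0 \<in> M"
    using M(1) unfolding is_subgroup_def by blast
  then have fixed: "f (M - {g}) = M - {g}"
    using assms(1) M \<open>g \<noteq> 0\<close> unfolding id_on_proper_subgroups_def P0_def by blast
  have "- {s} = (M - {g}) + f (insert 0 (- M))"
    using s complement_singleton_eq_plus[OF M(1) \<open>g \<in> M\<close> \<open>g \<noteq> 0\<close>]
      image_plus[of "M - {g}" "insert 0 (- M)"] fixed \<open>0 \<in> M\<close> \<open>g \<noteq> 0\<close> by simp
  moreover have "0 \<in> f (insert 0 (- M))"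
    by (simp add: zero_in_image)
  ultimately have "M - {g} \<subseteq> - {s}"
    using set_zero_plus2[of "f (insert 0 (- M))" "M - {g}"] by (simp add: add.commute)
  then show ?thesis
    by blast
qed

lemma complement_singleton_fixed_if_exp2:
  assumes A: "id_on_proper_subgroups f" and not_klein: "\<not> iso_klein TYPE('a)"
    and exp2: "\<And>c::'a. c + c = 0" and "g \<noteq> 0"
  shows "f (- {g}) = - {g}"
proof -
  obtain s where s: "s \<noteq> 0" "f (- {g}) = - {s}"
    using image_complement_singleton[OF \<open>g \<noteq> 0\<close>] .
  show ?thesis
  proof (rule ccontr)
    assume "f (- {g}) \<noteq> - {g}"
    then have "g \<noteq> s"
      using s by auto
    have "is_subgroup {0, g, s, g + s}"
      by (rule is_subgroup_span_pair_exp2[OF exp2])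
    moreover have "{0, g, s, g + s} \<noteq> UNIV"
      using iso_klein_if_exp2[OF exp2 \<open>g \<noteq> 0\<close> s(1) \<open>g \<noteq> s\<close>] not_klein by blast
    ultimately have "s = g \<or> s \<notin> {0, g, s, g + s}"
      using image_complement_singleton_notin_subgroup[OF A _ _ _ \<open>g \<noteq> 0\<close> s(2),
          where M = "{0, g, s, g + s}"] by simp
    then show False
      using \<open>g \<noteq> s\<close> by simp
  qed
qed

lemma complement_singleton_fixed:
  assumes "id_on_proper_subgroups f" "\<not> iso_klein TYPE('a)" "g \<noteq> 0"
  shows "f (- {g}) = - {g}"
proof (cases "\<exists>c::'a. c + c \<noteq> 0")
  case True
  then show ?thesis
    using complement_singleton_fixed_if_not_exp2 \<open>g \<noteq> 0\<close> by blast
next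
  case False
  then show ?thesis
    using complement_singleton_fixed_if_exp2 assms by blast
qed

lemma P0_member_fixed:
  assumes A: "id_on_proper_subgroups f" and B: "id_on_prime_quotients f"
    and not_klein: "\<not> iso_klein TYPE('a)"
  shows "0 \<in> X \<Longrightarrow> f X = X"
proof (induction "card (- X)" arbitrary: X rule: less_induct)
  case less
  show ?case
  proof (cases "\<exists>a. a \<noteq> 0 \<and> X + {0, a} = X")
    case True
    then show ?thesis
      using fixed_if_plus_pair_stable[OF B less.prems] by blast
  next
    case False
    have grow: "f X + {0, a} = X + {0, a}" if "a \<noteq> 0" for a
    proof -
      have "X \<subset> X + {0, a}"
        using False that by (auto simp: mem_plus_pair)
      then have "card (- (X + {0, a})) < card (- X)"
        by (intro psubset_card_mono) auto
      moreover have "0 \<in> X + {0, a}"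
        using less.prems by (simp add: mem_plus_pair)
      ultimately show ?thesis
        using less.hyps image_plus_pair[OF less.prems] by metis
    qed
    consider "X = UNIV" | g where "X = - {g}" | y z where "y \<notin> X" "z \<notin> X" "y \<noteq> z"
      by blast
    then show ?thesis
    proof cases
      case 1
      then show ?thesis
        by (simp add: image_UNIV)
    next
      case (2 g)
      then have "g \<noteq> 0"
        using less.prems by blast
      then show ?thesis
        using 2 complement_singleton_fixed[OF A not_klein] by blast
    next
      case (3 y z)
      then have "f X \<subseteq> X"
        using subset_if_plus_pairs_eq grow by metis
      moreover have "X \<subseteq> f X"
        using 3 calculation subset_if_plus_pairs_eq[of X "f X"] grow by blast
      ultimately show ?thesis
        by blast
    qed
  qed
qed

end

theorem proposition3p3:
  fixes f :: "'a::{finite, ab_group_add} set \<Rightarrow> 'a set"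
  assumes nontriv: "card (UNIV :: 'a set) > 1"
    and not_klein: "\<not> iso_klein TYPE('a)"
    and aut: "is_P0_aut f"
    and pull: "trivial_pullback f"
    and A: "\<And>H. is_subgroup H \<Longrightarrow> H \<noteq> UNIV \<Longrightarrow> (\<forall>X\<in>P0. X \<subseteq> H \<longrightarrow> f X = X)"
    and B: "\<And>H. is_subgroup H \<Longrightarrow> is_cyclic_subgroup H \<Longrightarrow> prime (card H) \<Longrightarrow>
              (\<forall>S\<in>P0_quot H. induced_aut f H S = S)"
  shows "\<forall>X\<in>P0. f X = X"
proof -
  interpret trivial_pullback_aut f
    using aut pull by unfold_locales
  have "id_on_proper_subgroups f" "id_on_prime_quotients f"
    unfolding id_on_proper_subgroups_def id_on_prime_quotients_def using A B by blast+
  then show ?thesis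
    using P0_member_fixed not_klein unfolding P0_def by blast
qed

end
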